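(* Let $\mathbb{K}$ be a field, $k\ge 1$, and let $\mathcal{C}\subseteq\mathbb{K}^{2k}$ be an indecomposable self-dual code. Then $\dim_{\mathbb{K}}(\mathcal{C}^{(2)})=2k-1$.
   Context: A linear code of length $n$ over $\mathbb{K}$ is a $\mathbb{K}$-subspace $\mathcal{C}\subseteq\mathbb{K}^n$; it is self-dual if $\mathcal{C}=\mathcal{C}^\perp$ with respect to the standard bilinear form $\sum_i x_iy_i$. The Schur (componentwise) product of $v,w\in\mathbb{K}^n$ is $v\ast w=(v_1w_1,\dots,v_nw_n)$, and $\mathcal{C}^{(2)}$ is the $\mathbb{K}$-span of all $c\ast c'$, $c,c'\in\mathcal{C}$. Two codes are equivalent if one is obtained from the other by a permutation of coordinates. A code is decomposable if it is equivalent to a direct sum $\mathcal{C}_1\oplus\mathcal{C}_2=\{(c_1,c_2):c_i\in\mathcal{C}_i\}$ of two nontrivial (nonzero, positive-length) codes, and indecomposable otherwise. *)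

theory Defs
  imports Main "HOL.Vector_Spaces" "HOL-Library.Function_Algebras" "HOL-Combinatorics.Permutations"
begin

text \<open>Vectors of \<open>K^n\<close> are represented as functions \<open>nat \<Rightarrow> 'a\<close> vanishing outside \<open>{0..<n}\<close>.\<close>

interpretation fv: vector_space "\<lambda>(c::'a::field) (v::nat \<Rightarrow> 'a). (\<lambda>i. c * v i)"
  by unfold_locales (auto simp: fun_eq_iff algebra_simps)

definition vecs :: "nat \<Rightarrow> (nat \<Rightarrow> 'a::zero) set" where
  "vecs n = {v. \<forall>i\<ge>n. v i = 0}"

definition linear_code :: "nat \<Rightarrow> (nat \<Rightarrow> 'a::field) set \<Rightarrow> bool" where
  "linear_code n C \<longleftrightarrow> C \<subseteq> vecs n \<and> fv.subspace C"

definition bil :: "nat \<Rightarrow> (nat \<Rightarrow> 'a::field) \<Rightarrow> (nat \<Rightarrow> 'a) \<Rightarrow> 'a" where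
  "bil n v w = (\<Sum>i<n. v i * w i)"

definition dual_code :: "nat \<Rightarrow> (nat \<Rightarrow> 'a::field) set \<Rightarrow> (nat \<Rightarrow> 'a) set" where
  "dual_code n C = {w \<in> vecs n. \<forall>c\<in>C. bil n c w = 0}"

definition self_dual :: "nat \<Rightarrow> (nat \<Rightarrow> 'a::field) set \<Rightarrow> bool" where
  "self_dual n C \<longleftrightarrow> linear_code n C \<and> C = dual_code n C"

definition schur :: "(nat \<Rightarrow> 'a::field) \<Rightarrow> (nat \<Rightarrow> 'a) \<Rightarrow> (nat \<Rightarrow> 'a)" where
  "schur v w = (\<lambda>i. v i * w i)"

definition schur_square :: "(nat \<Rightarrow> 'a::field) set \<Rightarrow> (nat \<Rightarrow> 'a) set" where
  "schur_square C = fv.span {schur c c' | c c'. c \<in> C \<and> c' \<in> C}"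

definition perm_code :: "(nat \<Rightarrow> nat) \<Rightarrow> (nat \<Rightarrow> 'a) set \<Rightarrow> (nat \<Rightarrow> 'a) set" where
  "perm_code \<sigma> C = (\<lambda>v. v \<circ> \<sigma>) ` C"

definition direct_sum :: "nat \<Rightarrow> (nat \<Rightarrow> 'a) set \<Rightarrow> (nat \<Rightarrow> 'a) set \<Rightarrow> (nat \<Rightarrow> 'a) set" where
  "direct_sum m C1 C2 = {(\<lambda>i. if i < m then c1 i else c2 (i - m)) | c1 c2. c1 \<in> C1 \<and> c2 \<in> C2}"

definition decomposable :: "nat \<Rightarrow> (nat \<Rightarrow> 'a::field) set \<Rightarrow> bool" where
  "decomposable n C \<longleftrightarrow> (\<exists>\<sigma> m C1 C2. \<sigma> permutes {..<n} \<and> 0 < m \<and> m < n \<and>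
      linear_code m C1 \<and> linear_code (n - m) C2 \<and> C1 \<noteq> {0} \<and> C2 \<noteq> {0} \<and>
      perm_code \<sigma> C = direct_sum m C1 C2)"

definition indecomposable :: "nat \<Rightarrow> (nat \<Rightarrow> 'a::field) set \<Rightarrow> bool" where
  "indecomposable n C \<longleftrightarrow> \<not> decomposable n C"

end

theory Submission
  imports Defs "HOL-Library.Indicator_Function"
begin

text \<open>
  For a self-dual code \<open>C\<close> of length \<open>n\<close>, the coordinate sum of \<open>c * c'\<close> is the inner
  product of \<open>c\<close> and \<open>c'\<close>, which vanishes; so \<open>C^(2)\<close> lies in the hyperplane of
  zero-sum vectors, of dimension \<open>n - 1\<close>. If \<open>C^(2)\<close> were smaller, some vector \<open>w\<close>
  would be orthogonal to \<open>C^(2)\<close> without being constant on the coordinates. Orthogonality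
  to \<open>C^(2)\<close> says \<open>w * C \<subseteq> C\<^sup>\<bottom> = C\<close>; Lagrange interpolation in the values of \<open>w\<close>
  then makes \<open>C\<close> stable under multiplication by the indicator of a proper level set \<open>S\<close>
  of \<open>w\<close>, and such a code is the direct sum of its restrictions to \<open>S\<close> and to the
  complement of \<open>S\<close>, contradicting indecomposability.
\<close>

definition schur_stable :: "(nat \<Rightarrow> 'a::field) \<Rightarrow> (nat \<Rightarrow> 'a) set \<Rightarrow> bool" where
  "schur_stable w C \<longleftrightarrow> (\<forall>c\<in>C. schur w c \<in> C)"

definition full_support :: "nat \<Rightarrow> (nat \<Rightarrow> 'a::field) set \<Rightarrow> bool" where
  "full_support n C \<longleftrightarrow> (\<forall>i<n. \<exists>c\<in>C. c i \<noteq> 0)"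

lemma sum_fun_apply: "(\<Sum>a\<in>A. f a) x = (\<Sum>a\<in>A. f a x)"
  by (induct A rule: infinite_finite_induct) auto

lemma vecs_schur: "c \<in> vecs n \<Longrightarrow> schur w c \<in> vecs n"
  by (simp add: vecs_def schur_def)

lemma schur_cong_vecs:
  assumes "c \<in> vecs n" and "\<And>l. l < n \<Longrightarrow> f l = g l"
  shows "schur f c = schur g c"
proof
  fix l
  show "schur f c l = schur g c l"
    using assms by (cases "l < n") (simp_all add: schur_def vecs_def)
qed

lemma fv_subspace_image:
  fixes f :: "(nat \<Rightarrow> 'a::field) \<Rightarrow> (nat \<Rightarrow> 'a)"
  assumes "fv.subspace C"
    and add: "\<And>u v. f (u + v) = f u + f v"
    and scale: "\<And>a v. f (\<lambda>i. a * v i) = (\<lambda>i. a * f v i)"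
  shows "fv.subspace (f ` C)"
proof -
  have "module_hom (\<lambda>(a::'a) (v::nat \<Rightarrow> 'a) i. a * v i) (\<lambda>a v i. a * v i) f"
    by unfold_locales (simp_all add: add scale)
  then show ?thesis
    using assms(1) by (rule module_hom.subspace_image)
qed

section \<open>Lagrange interpolation inside a Schur-stable code\<close>

lemma schur_stable_lagrange_prod:
  fixes w :: "nat \<Rightarrow> 'a::field"
  assumes sub: "fv.subspace C" and stable: "schur_stable w C"
    and "finite T" and "a \<notin> T"
  shows "schur_stable (\<lambda>l. \<Prod>b\<in>T. (w l - b) / (a - b)) C"
  using \<open>finite T\<close> \<open>a \<notin> T\<close>
proof (induct T rule: finite_induct)
  case empty
  then show ?case by (simp add: schur_stable_def schur_def)
next
  case (insert b T)
  show ?case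
    unfolding schur_stable_def
  proof
    fix c assume "c \<in> C"
    define u where "u = schur (\<lambda>l. \<Prod>b\<in>T. (w l - b) / (a - b)) c"
    have u: "u \<in> C" using insert \<open>c \<in> C\<close> by (simp add: schur_stable_def u_def)
    then have "schur w u - (\<lambda>i. b * u i) \<in> C"
      using stable fv.subspace_diff[OF sub _ fv.subspace_scale[OF sub u]]
      by (simp add: schur_stable_def)
    then have "(\<lambda>i. (1 / (a - b)) * (schur w u - (\<lambda>i. b * u i)) i) \<in> C"
      using fv.subspace_scale[OF sub] by blast
    moreover have "(\<lambda>i. (1 / (a - b)) * (schur w u - (\<lambda>i. b * u i)) i)
        = schur (\<lambda>l. \<Prod>b\<in>insert b T. (w l - b) / (a - b)) c"
      using insert by (auto simp: fun_eq_iff u_def schur_def field_simps)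
    ultimately show "schur (\<lambda>l. \<Prod>b\<in>insert b T. (w l - b) / (a - b)) c \<in> C" by simp
  qed
qed

lemma schur_stable_level_set:
  fixes w :: "nat \<Rightarrow> 'a::field"
  assumes sub: "fv.subspace C" and Cv: "C \<subseteq> vecs n" and stable: "schur_stable w C"
  shows "schur_stable (indicator {l. l < n \<and> w l = a}) C"
proof -
  define T where "T = w ` {..<n} - {a}"
  define p where "p l = (\<Prod>b\<in>T. (w l - b) / (a - b))" for l
  have "p l = indicator {l. l < n \<and> w l = a} l" if "l < n" for l
  proof (cases "w l = a")
    case True
    then have "p l = 1" by (auto simp: p_def T_def intro: prod.neutral)
    then show ?thesis using that True by (simp add: indicator_def)
  next
    case False
    then have "w l \<in> T" using that by (auto simp: T_def)
    then have "p l = 0" by (auto simp: p_def T_def intro: prod_zero)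
    then show ?thesis using False by (simp add: indicator_def)
  qed
  then have "schur p c = schur (indicator {l. l < n \<and> w l = a}) c" if "c \<in> C" for c
    using that Cv by (intro schur_cong_vecs) auto
  moreover have "schur_stable p C"
    unfolding p_def by (rule schur_stable_lagrange_prod[OF sub stable]) (simp_all add: T_def)
  ultimately show ?thesis by (simp add: schur_stable_def)
qed

section \<open>Splitting off a block of coordinates\<close>

definition truncate_code :: "nat \<Rightarrow> (nat \<Rightarrow> 'a::zero) set \<Rightarrow> (nat \<Rightarrow> 'a) set" where
  "truncate_code m D = (\<lambda>v i. if i < m then v i else 0) ` D"

definition shift_code :: "nat \<Rightarrow> (nat \<Rightarrow> 'a) set \<Rightarrow> (nat \<Rightarrow> 'a) set" where
  "shift_code m D = (\<lambda>v i. v (i + m)) ` D"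

lemma direct_sum_truncate_shift:
  fixes D :: "(nat \<Rightarrow> 'a::field) set"
  assumes sub: "fv.subspace D" and stable: "schur_stable (indicator {..<m}) D"
  shows "D = direct_sum m (truncate_code m D) (shift_code m D)"
proof
  show "D \<subseteq> direct_sum m (truncate_code m D) (shift_code m D)"
  proof
    fix v assume "v \<in> D"
    show "v \<in> direct_sum m (truncate_code m D) (shift_code m D)"
      unfolding direct_sum_def
      by (rule CollectI, rule exI[of _ "\<lambda>i. if i < m then v i else 0"], rule exI[of _ "\<lambda>i. v (i + m)"])
        (use \<open>v \<in> D\<close> in \<open>auto simp: truncate_code_def shift_code_def fun_eq_iff\<close>)
  qed
next
  show "direct_sum m (truncate_code m D) (shift_code m D) \<subseteq> D"
  proof
    fix x assume "x \<in> direct_sum m (truncate_code m D) (shift_code m D)"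
    then obtain c1 c2 where "c1 \<in> truncate_code m D" "c2 \<in> shift_code m D"
      and x: "x = (\<lambda>i. if i < m then c1 i else c2 (i - m))"
      by (auto simp: direct_sum_def)
    then obtain v v' where "v \<in> D" "v' \<in> D"
      and c: "c1 = (\<lambda>i. if i < m then v i else 0)" "c2 = (\<lambda>i. v' (i + m))"
      by (auto simp: truncate_code_def shift_code_def)
    then have "schur (indicator {..<m}) v + (v' - schur (indicator {..<m}) v') \<in> D"
      using stable fv.subspace_add[OF sub] fv.subspace_diff[OF sub]
      by (simp add: schur_stable_def)
    moreover have "schur (indicator {..<m}) v + (v' - schur (indicator {..<m}) v') = x"
      by (auto simp: x c schur_def indicator_def fun_eq_iff)
    ultimately show "x \<in> D" by simp
  qed
qed

lemma linear_code_truncate_code: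
  "fv.subspace D \<Longrightarrow> linear_code m (truncate_code m D)"
  unfolding linear_code_def truncate_code_def
  by (auto simp: vecs_def fun_eq_iff intro: fv_subspace_image)

lemma linear_code_shift_code:
  "linear_code n D \<Longrightarrow> linear_code (n - m) (shift_code m D)"
  unfolding linear_code_def shift_code_def
  by (auto simp: vecs_def fun_eq_iff intro: fv_subspace_image)

lemma truncate_code_nonzero:
  assumes "full_support n D" and "0 < m" and "m \<le> n"
  shows "truncate_code m D \<noteq> {0}"
proof -
  obtain v where "v \<in> D" "v 0 \<noteq> 0"
    using assms by (auto simp: full_support_def)
  then have "(\<lambda>i. if i < m then v i else 0) \<in> truncate_code m D - {0}"
    using \<open>0 < m\<close> by (auto simp: truncate_code_def fun_eq_iff)
  then show ?thesis by blast
qed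

lemma shift_code_nonzero:
  assumes "full_support n D" and "m < n"
  shows "shift_code m D \<noteq> {0}"
proof -
  obtain v where "v \<in> D" "v m \<noteq> 0"
    using assms by (auto simp: full_support_def)
  then have "(\<lambda>i. v (i + m)) \<in> shift_code m D - {0}"
    by (auto simp: shift_code_def fun_eq_iff) (metis add_0)
  then show ?thesis by blast
qed

lemma linear_code_perm_code:
  assumes "\<sigma> permutes {..<n}" and "linear_code n C"
  shows "linear_code n (perm_code \<sigma> C)"
proof -
  have "fv.subspace (perm_code \<sigma> C)"
    using assms(2) unfolding perm_code_def linear_code_def
    by (intro fv_subspace_image) (auto simp: fun_eq_iff)
  moreover have "perm_code \<sigma> C \<subseteq> vecs n"
    using assms permutes_not_in[OF assms(1)]
    by (auto simp: linear_code_def perm_code_def vecs_def subset_iff)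
  ultimately show ?thesis by (simp add: linear_code_def)
qed

lemma full_support_perm_code:
  assumes "\<sigma> permutes {..<n}" and "full_support n C"
  shows "full_support n (perm_code \<sigma> C)"
  using assms permutes_in_image[OF assms(1)]
  by (fastforce simp: full_support_def perm_code_def)

lemma schur_stable_perm_code:
  "schur_stable w C \<Longrightarrow> schur_stable (w \<circ> \<sigma>) (perm_code \<sigma> C)"
  by (auto simp: schur_stable_def perm_code_def schur_def comp_def)

lemma permutes_onto_initial_segment:
  assumes S: "S \<subseteq> {..<n}"
  obtains \<sigma> where "\<sigma> permutes {..<n}" and "\<And>i. \<sigma> i \<in> S \<longleftrightarrow> i < card S"
proof -
  define m where "m = card S"
  define R where "R = {..<n} - S"
  have "finite S" using S finite_subset by blast
  have "m \<le> n" using S by (metis m_def card_lessThan card_mono finite_lessThan)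
  have "card R = n - m" using S \<open>finite S\<close> by (simp add: R_def m_def card_Diff_subset)
  obtain f where f: "bij_betw f {..<m} S"
    using finite_same_card_bij[of "{..<m}" S] \<open>finite S\<close> by (auto simp: m_def)
  obtain g where g: "bij_betw g {m..<n} R"
    using finite_same_card_bij[of "{m..<n}" R] \<open>card R = n - m\<close> by (auto simp: R_def)
  define \<sigma> where "\<sigma> i = (if i < m then f i else if i < n then g i else i)" for i
  have b1: "bij_betw \<sigma> {..<m} S"
    using f by (rule bij_betw_cong[THEN iffD1, rotated]) (auto simp: \<sigma>_def)
  have b2: "bij_betw \<sigma> {m..<n} R"
    using g by (rule bij_betw_cong[THEN iffD1, rotated]) (auto simp: \<sigma>_def)
  have "bij_betw \<sigma> ({..<m} \<union> {m..<n}) (S \<union> R)"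
    by (rule bij_betw_combine[OF b1 b2]) (auto simp: R_def)
  moreover have "{..<m} \<union> {m..<n} = {..<n}" and "S \<union> R = {..<n}"
    using \<open>m \<le> n\<close> S by (auto simp: R_def)
  ultimately have "\<sigma> permutes {..<n}"
    by (intro bij_imp_permutes) (auto simp: \<sigma>_def)
  moreover have "\<sigma> i \<in> S \<longleftrightarrow> i < m" for i
    using bij_betw_apply[OF b1, of i] bij_betw_apply[OF b2, of i] S \<open>m \<le> n\<close>
    by (auto simp: R_def \<sigma>_def)
  ultimately show ?thesis using that by (simp add: m_def)
qed

lemma decomposable_if_schur_stable_indicator:
  assumes C: "linear_code n C" "full_support n C"
    and S: "S \<subseteq> {..<n}" "S \<noteq> {}" "S \<noteq> {..<n}"
    and stable: "schur_stable (indicator S) C"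
  shows "decomposable n C"
proof -
  obtain \<sigma> where \<sigma>: "\<sigma> permutes {..<n}" and \<sigma>S: "\<And>i. \<sigma> i \<in> S \<longleftrightarrow> i < card S"
    using permutes_onto_initial_segment[OF S(1)] by blast
  define m where "m = card S"
  define D where "D = perm_code \<sigma> C"
  have "finite S" using S(1) finite_subset by blast
  then have "0 < m" using S(2) by (simp add: m_def card_gt_0_iff)
  have "m < n"
    using S(1,3) unfolding m_def by (metis card_lessThan finite_lessThan psubsetI psubset_card_mono)
  have D: "linear_code n D" "full_support n D"
    using linear_code_perm_code[OF \<sigma> C(1)] full_support_perm_code[OF \<sigma> C(2)] by (simp_all add: D_def)
  have "indicator S \<circ> \<sigma> = (indicator {..<m} :: nat \<Rightarrow> 'a)"
    using \<sigma>S by (auto simp: indicator_def fun_eq_iff m_def)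
  then have "schur_stable (indicator {..<m}) D"
    using schur_stable_perm_code[OF stable, where \<sigma>=\<sigma>] by (simp add: D_def)
  then have "D = direct_sum m (truncate_code m D) (shift_code m D)"
    using D(1) by (intro direct_sum_truncate_shift) (simp_all add: linear_code_def)
  moreover have "linear_code m (truncate_code m D)" "linear_code (n - m) (shift_code m D)"
    using D(1) linear_code_truncate_code linear_code_shift_code unfolding linear_code_def by blast+
  moreover have "truncate_code m D \<noteq> {0}" "shift_code m D \<noteq> {0}"
    using truncate_code_nonzero[OF D(2) \<open>0 < m\<close>] shift_code_nonzero[OF D(2) \<open>m < n\<close>] \<open>m < n\<close>
    by simp_all
  ultimately show ?thesis
    unfolding decomposable_def D_def using \<sigma> \<open>0 < m\<close> \<open>m < n\<close> by blast
qed

lemma indecomposable_schur_stable_const: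
  fixes C :: "(nat \<Rightarrow> 'a::field) set"
  assumes C: "linear_code n C" "full_support n C" "indecomposable n C"
    and stable: "schur_stable w C" and "i < n" "j < n"
  shows "w i = w j"
proof (rule ccontr)
  assume "w i \<noteq> w j"
  define S where "S = {l. l < n \<and> w l = w i}"
  have "schur_stable (indicator S) C"
    using C(1) stable unfolding S_def linear_code_def by (blast intro: schur_stable_level_set)
  moreover have "S \<subseteq> {..<n}" "i \<in> S" "j \<notin> S"
    using \<open>i < n\<close> \<open>w i \<noteq> w j\<close> by (auto simp: S_def)
  ultimately have "decomposable n C"
    using decomposable_if_schur_stable_indicator[OF C(1,2)] \<open>j < n\<close> by blast
  then show False using C(3) by (simp add: indecomposable_def)
qed

section \<open>Self-dual codes\<close>

lemma self_dualD:
  assumes "self_dual n C"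
  shows "C \<subseteq> vecs n" "dual_code n C = C"
  using assms by (auto simp: self_dual_def linear_code_def)

definition unit_vec :: "nat \<Rightarrow> nat \<Rightarrow> 'a::field" where
  "unit_vec l = (\<lambda>i. if i = l then 1 else 0)"

lemma bil_unit_vec: "i < n \<Longrightarrow> bil n v (unit_vec i) = v i"
  by (simp add: bil_def unit_vec_def if_distrib cong: if_cong)

lemma self_dual_full_support:
  fixes C :: "(nat \<Rightarrow> 'a::field) set"
  assumes "self_dual n C"
  shows "full_support n C"
  unfolding full_support_def
proof (intro allI impI)
  fix i assume "i < n"
  define e :: "nat \<Rightarrow> 'a" where "e = unit_vec i"
  show "\<exists>c\<in>C. c i \<noteq> 0"
  proof (rule ccontr)
    assume "\<not> (\<exists>c\<in>C. c i \<noteq> 0)"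
    moreover have "e \<in> vecs n"
      using \<open>i < n\<close> by (simp add: e_def vecs_def unit_vec_def)
    ultimately have "e \<in> dual_code n C"
      using \<open>i < n\<close> by (auto simp: dual_code_def e_def bil_unit_vec)
    moreover from this have "e \<in> C"
      using self_dualD(2)[OF assms] by simp
    ultimately have "bil n e e = 0"
      unfolding dual_code_def by blast
    with \<open>i < n\<close> show False by (simp add: e_def bil_unit_vec) (simp add: unit_vec_def)
  qed
qed

lemma self_dual_schur_stable:
  assumes sd: "self_dual n C"
    and orth: "\<And>c c'. c \<in> C \<Longrightarrow> c' \<in> C \<Longrightarrow> bil n (schur c c') w = 0"
  shows "schur_stable w C"
  unfolding schur_stable_def
proof
  fix c assume "c \<in> C"
  then have "schur w c \<in> vecs n"
    using self_dualD(1)[OF sd] by (auto intro: vecs_schur)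
  moreover have "bil n c' (schur w c) = bil n (schur c' c) w" for c'
    by (simp add: bil_def schur_def mult_ac)
  ultimately have "schur w c \<in> dual_code n C"
    using orth \<open>c \<in> C\<close> by (simp add: dual_code_def)
  then show "schur w c \<in> C" using self_dualD(2)[OF sd] by simp
qed

section \<open>Orthogonal complements in \<open>K^n\<close>\<close>

interpretation fp: vector_space_pair "\<lambda>(c::'a::field) (v::nat \<Rightarrow> 'a). (\<lambda>i. c * v i)" "(*) :: 'a \<Rightarrow> 'a \<Rightarrow> 'a"
  by unfold_locales (simp_all add: algebra_simps)

lemma vecs_eq_sum_unit_vec:
  assumes "v \<in> vecs n"
  shows "v = (\<Sum>l<n. (\<lambda>i. v l * unit_vec l i))"
proof
  fix x
  have "(\<Sum>l<n. (\<lambda>i. v l * unit_vec l i)) x = (\<Sum>l<n. if x = l then v l else 0)"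
    by (simp add: sum_fun_apply unit_vec_def if_distrib cong: if_cong)
  also have "\<dots> = v x"
    using assms by (simp add: vecs_def)
  finally show "v x = (\<Sum>l<n. (\<lambda>i. v l * unit_vec l i)) x" by simp
qed

lemma linear_functional_eq_bil:
  fixes g :: "(nat \<Rightarrow> 'a::field) \<Rightarrow> 'a"
  assumes "Vector_Spaces.linear (\<lambda>c v i. c * v i) (*) g" and "v \<in> vecs n"
  shows "g v = bil n v (\<lambda>l. g (unit_vec l))"
proof -
  interpret module_hom "\<lambda>c v i. c * v i" "(*)" g
    using assms(1) by (rule module_hom_linearI)
  have "g v = g (\<Sum>l<n. (\<lambda>i. v l * unit_vec l i))"
    using vecs_eq_sum_unit_vec[OF assms(2)] by simp
  also have "\<dots> = bil n v (\<lambda>l. g (unit_vec l))"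
    by (simp add: sum scale bil_def)
  finally show ?thesis .
qed

lemma subspace_separating_vector:
  fixes D :: "(nat \<Rightarrow> 'a::field) set"
  assumes sub: "fv.subspace D" and "D \<subseteq> vecs n" and "y \<in> vecs n" and "y \<notin> D"
  obtains w where "\<And>d. d \<in> D \<Longrightarrow> bil n d w = 0" and "bil n y w \<noteq> 0"
proof -
  obtain B where B: "B \<subseteq> D" "fv.independent B" "D \<subseteq> fv.span B"
    by (rule fv.basis_exists)
  have "fv.span B = D"
    using B sub by (simp add: fv.span_subspace)
  then have "fv.independent (insert y B)"
    using B(2) \<open>y \<notin> D\<close> by (simp add: fv.independent_insertI)
  then obtain g where lin: "Vector_Spaces.linear (\<lambda>c v i. c * v i) (*) g"
    and g: "\<forall>z\<in>insert y B. g z = (if z = y then 1 else (0::'a))"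
    using fp.linear_independent_extend[of "insert y B" "\<lambda>z. if z = y then 1 else 0"] by blast
  interpret module_hom "\<lambda>c v i. c * v i" "(*)" g
    using lin by (rule module_hom_linearI)
  have "g z = 0" if "z \<in> B" for z
    using g B(1) \<open>y \<notin> D\<close> that by auto
  then have g0: "g d = 0" if "d \<in> D" for d
    using eq_0_on_span B(3) that by blast
  define w where "w = (\<lambda>l. g (unit_vec l))"
  have bil_w: "bil n v w = g v" if "v \<in> vecs n" for v
    using linear_functional_eq_bil[OF lin that] by (simp add: w_def)
  show ?thesis
  proof (rule that[of w])
    fix d assume "d \<in> D"
    then show "bil n d w = 0" using bil_w g0 \<open>D \<subseteq> vecs n\<close> by auto
  next
    show "bil n y w \<noteq> 0" using bil_w g \<open>y \<in> vecs n\<close> by simp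
  qed
qed

section \<open>The zero-sum code\<close>

definition zero_sum_vecs :: "nat \<Rightarrow> (nat \<Rightarrow> 'a::field) set" where
  "zero_sum_vecs n = {v \<in> vecs n. (\<Sum>i<n. v i) = 0}"

lemma subspace_zero_sum_vecs: "fv.subspace (zero_sum_vecs n)"
  by (rule fv.subspaceI)
    (auto simp: zero_sum_vecs_def vecs_def sum.distrib sum_distrib_left[symmetric])

definition zero_sum_basis :: "nat \<Rightarrow> (nat \<Rightarrow> 'a::field) set" where
  "zero_sum_basis m = (\<lambda>j. unit_vec j - unit_vec m) ` {..<m}"

lemma unit_vec_diff_apply:
  "j < m \<Longrightarrow> unit_vec j l - unit_vec m l = (if l = j then 1 else if l = m then -1 else 0)"
  by (simp add: unit_vec_def)

lemma sum_scale_unit_vec_diff: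
  assumes "l < m"
  shows "(\<Sum>j<m. f j * (unit_vec j l - unit_vec m l)) = (f l :: 'a::field)"
proof -
  have "(\<Sum>j<m. f j * (unit_vec j l - unit_vec m l)) = (\<Sum>j<m. if j = l then f j else 0)"
    using assms by (intro sum.cong) (auto simp: unit_vec_diff_apply)
  then show ?thesis using assms by simp
qed

lemma inj_on_unit_vec_diff:
  "inj_on (\<lambda>j. unit_vec j - unit_vec m :: nat \<Rightarrow> 'a::field) {..<m}"
proof (rule inj_onI)
  fix i j assume "i \<in> {..<m}" "j \<in> {..<m}"
    and eq: "unit_vec i - unit_vec m = (unit_vec j - unit_vec m :: nat \<Rightarrow> 'a)"
  then have "i \<noteq> m" "j < m" by auto
  then have "(if i = j then 1 else 0 :: 'a) = unit_vec j i - unit_vec m i"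
    by (simp add: unit_vec_diff_apply)
  also have "\<dots> = unit_vec i i - unit_vec m i"
    using fun_cong[OF eq, of i] by simp
  also have "\<dots> = 1"
    using \<open>i \<in> {..<m}\<close> by (simp add: unit_vec_diff_apply)
  finally show "i = j" by (simp split: if_splits)
qed

lemma card_zero_sum_basis: "card (zero_sum_basis m :: (nat \<Rightarrow> 'a::field) set) = m"
  unfolding zero_sum_basis_def by (simp add: card_image inj_on_unit_vec_diff)

lemma zero_sum_basis_subset: "(zero_sum_basis m :: (nat \<Rightarrow> 'a::field) set) \<subseteq> zero_sum_vecs (Suc m)"
  unfolding zero_sum_basis_def
proof (rule image_subsetI)
  fix j assume "j \<in> {..<m}"
  then have "(\<Sum>l<m. unit_vec j l - unit_vec m l) = (\<Sum>l<m. if l = j then 1 else 0)"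
    by (intro sum.cong) (auto simp: unit_vec_diff_apply)
  then show "unit_vec j - unit_vec m \<in> zero_sum_vecs (Suc m)"
    using \<open>j \<in> {..<m}\<close> by (simp add: zero_sum_vecs_def vecs_def unit_vec_diff_apply)
qed

lemma zero_sum_vecs_subset_span_basis:
  "zero_sum_vecs (Suc m) \<subseteq> fv.span (zero_sum_basis m :: (nat \<Rightarrow> 'a::field) set)"
proof
  fix v :: "nat \<Rightarrow> 'a" assume v: "v \<in> zero_sum_vecs (Suc m)"
  have "(\<Sum>j<m. v j * (unit_vec j l - unit_vec m l)) = v l" for l
  proof (cases l m rule: linorder_cases)
    case less
    then show ?thesis by (rule sum_scale_unit_vec_diff)
  next
    case equal
    have "(\<Sum>j<m. v j * (unit_vec j m - unit_vec m m)) = - (\<Sum>j<m. v j)"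
      by (simp add: unit_vec_diff_apply sum_negf)
    also have "\<dots> = v m"
      using v by (simp add: zero_sum_vecs_def neg_eq_iff_add_eq_0 add.commute)
    finally show ?thesis using equal by simp
  next
    case greater
    then show ?thesis using v by (simp add: unit_vec_diff_apply zero_sum_vecs_def vecs_def)
  qed
  then have "(\<Sum>j<m. (\<lambda>l. v j * (unit_vec j - unit_vec m) l)) = v"
    by (simp add: fun_eq_iff sum_fun_apply)
  moreover have "(\<Sum>j<m. (\<lambda>l. v j * (unit_vec j - unit_vec m) l)) \<in> fv.span (zero_sum_basis m)"
    unfolding zero_sum_basis_def by (intro fv.span_sum fv.span_scale fv.span_base imageI) simp
  ultimately show "v \<in> fv.span (zero_sum_basis m)" by simp
qed

lemma independent_zero_sum_basis: "fv.independent (zero_sum_basis m :: (nat \<Rightarrow> 'a::field) set)"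
proof (rule fv.independent_if_scalars_zero)
  fix f :: "(nat \<Rightarrow> 'a) \<Rightarrow> 'a" and y :: "nat \<Rightarrow> 'a"
  assume sum0: "(\<Sum>y\<in>zero_sum_basis m. (\<lambda>i. f y * y i)) = 0" and "y \<in> zero_sum_basis m"
  then obtain j where "j < m" and y: "y = unit_vec j - unit_vec m"
    by (auto simp: zero_sum_basis_def)
  have "0 = (\<Sum>y\<in>zero_sum_basis m. f y * y j)"
    using fun_cong[OF sum0, of j] by (simp add: sum_fun_apply)
  also have "\<dots> = (\<Sum>i<m. f (unit_vec i - unit_vec m) * (unit_vec i j - unit_vec m j))"
    unfolding zero_sum_basis_def by (subst sum.reindex[OF inj_on_unit_vec_diff]) simp
  also have "\<dots> = f y"
    using sum_scale_unit_vec_diff[OF \<open>j < m\<close>, of "\<lambda>i. f (unit_vec i - unit_vec m)"] y by simp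
  finally show "f y = 0" by simp
qed (simp add: zero_sum_basis_def)

lemma dim_zero_sum_vecs: "fv.dim (zero_sum_vecs (Suc m) :: (nat \<Rightarrow> 'a::field) set) = m"
  using zero_sum_basis_subset zero_sum_vecs_subset_span_basis independent_zero_sum_basis
    card_zero_sum_basis
  by (rule fv.dim_unique)

lemma schur_square_subset_zero_sum_vecs:
  fixes C :: "(nat \<Rightarrow> 'a::field) set"
  assumes "C \<subseteq> dual_code n C"
  shows "schur_square C \<subseteq> zero_sum_vecs n"
  unfolding schur_square_def
proof (rule fv.span_minimal[OF _ subspace_zero_sum_vecs])
  show "{schur c c' |c c'. c \<in> C \<and> c' \<in> C} \<subseteq> zero_sum_vecs n"
    using assms by (fastforce simp: dual_code_def zero_sum_vecs_def vecs_def schur_def bil_def)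
qed

lemma zero_sum_vecs_subset_schur_square:
  fixes C :: "(nat \<Rightarrow> 'a::field) set"
  assumes sd: "self_dual n C" and ind: "indecomposable n C"
  shows "zero_sum_vecs n \<subseteq> schur_square C"
proof
  fix y :: "nat \<Rightarrow> 'a" assume y: "y \<in> zero_sum_vecs n"
  show "y \<in> schur_square C"
  proof (rule ccontr)
    assume "y \<notin> schur_square C"
    moreover have "schur_square C \<subseteq> vecs n"
      using schur_square_subset_zero_sum_vecs[of C n] self_dualD(2)[OF sd]
      unfolding zero_sum_vecs_def by blast
    moreover have "fv.subspace (schur_square C)"
      unfolding schur_square_def by (rule fv.subspace_span)
    moreover have "y \<in> vecs n" using y by (simp add: zero_sum_vecs_def)
    ultimately obtain w where w0: "\<And>d. d \<in> schur_square C \<Longrightarrow> bil n d w = 0"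
      and "bil n y w \<noteq> 0"
      using subspace_separating_vector by metis
    have "bil n (schur c c') w = 0" if "c \<in> C" "c' \<in> C" for c c'
    proof (rule w0)
      show "schur c c' \<in> schur_square C"
        unfolding schur_square_def by (rule fv.span_base) (use that in blast)
    qed
    then have "schur_stable w C"
      by (rule self_dual_schur_stable[OF sd])
    define a where "a = w 0"
    have "w i = a" if "i < n" for i
      unfolding a_def
    proof (rule indecomposable_schur_stable_const)
      show "linear_code n C" using sd by (simp add: self_dual_def)
    qed (use sd ind \<open>schur_stable w C\<close> that in \<open>simp_all add: self_dual_full_support\<close>)
    then have "bil n y w = (\<Sum>i<n. y i) * a"
      by (simp add: bil_def sum_distrib_right)
    also have "\<dots> = 0" using y by (simp add: zero_sum_vecs_def)
    finally show False using \<open>bil n y w \<noteq> 0\<close> by simp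
  qed
qed

theorem dim_schur_square_self_dual_indecomposable:
  fixes C :: "(nat \<Rightarrow> 'a::field) set"
  assumes "self_dual (Suc m) C" and "indecomposable (Suc m) C"
  shows "fv.dim (schur_square C) = m"
proof -
  have "schur_square C \<subseteq> zero_sum_vecs (Suc m)"
    by (rule schur_square_subset_zero_sum_vecs) (simp add: self_dualD(2)[OF assms(1)])
  moreover have "zero_sum_vecs (Suc m) \<subseteq> schur_square C"
    by (rule zero_sum_vecs_subset_schur_square[OF assms])
  ultimately have "schur_square C = zero_sum_vecs (Suc m)" by (rule subset_antisym)
  then show ?thesis by (simp add: dim_zero_sum_vecs)
qed

theorem mainTheorem2:
  fixes C :: "(nat \<Rightarrow> 'a::field) set" and k :: nat
  assumes "k \<ge> 1"
    and "self_dual (2 * k) C"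
    and "indecomposable (2 * k) C"
  shows "fv.dim (schur_square C) = 2 * k - 1"
proof -
  have "Suc (2 * k - 1) = 2 * k" using assms(1) by simp
  then show ?thesis
    using dim_schur_square_self_dual_indecomposable[of "2 * k - 1" C] assms(2,3) by (simp only:)
qed

end
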